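(* Let $\Gamma$ be a distance-regular graph with diameter $D\ge 3$, valency $k$ and $a_1\neq 0$. Let $\sigma_0,\sigma_1,\dots,\sigma_D$ and $\varepsilon$ be real numbers with $\sigma_0=1$; write $\sigma=\sigma_1$. Consider the following conditions. Condition A: $\varepsilon\neq -1$, and for $1\le i\le D-1$, $$a_i=g\,\frac{(\sigma_{i+1}-\sigma\sigma_i)(\sigma_{i-1}-\sigma\sigma_i)}{(\sigma_{i+1}-\sigma_i)(\sigma_{i-1}-\sigma_i)},\qquad g=\frac{(\varepsilon-1)(1-\sigma_2)}{(\sigma^2-\sigma_2)(1-\varepsilon\sigma)},$$ with all denominators appearing here nonzero. Condition B: for $1\le i\le D-1$, $$b_i(\sigma_{i-1}-\sigma_{i+1})=h\,\frac{(\sigma_{i-1}-\sigma\sigma_i)(\sigma_{i+1}-\varepsilon\sigma_i)}{\sigma_{i+1}-\sigma_i},\qquad h=\frac{(1-\sigma)(1-\sigma_2)}{(\sigma^2-\sigma_2)(1-\varepsilon\sigma)},$$ with all denominators appearing here nonzero. Condition C: $k=h\dfrac{\sigma-\varepsilon}{\sigma-1}$ and for $1\le i\le D-1$, $$c_i(\sigma_{i+1}-\sigma_{i-1})=h\,\frac{(\sigma_{i+1}-\sigma\sigma_i)(\sigma_{i-1}-\varepsilon\sigma_i)}{\sigma_{i-1}-\sigma_i},$$ with $h$ as in Condition B, and all denominators appearing here (including that of $h$) nonzero. Then the following are equivalent: (i) $\sigma_0,\dots,\sigma_D$ is a tight nontrivial pseudo cosine sequence and $\varepsilon$ is its auxiliary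 parameter; (ii) $\sigma_0,\dots,\sigma_D$ is a nontrivial pseudo cosine sequence and $\sigma_0,\dots,\sigma_D,\varepsilon$ satisfy Condition A; (iii) $\sigma_0,\dots,\sigma_D,\varepsilon$ satisfy both Condition A and Condition B; (iv) $\sigma_0,\dots,\sigma_D,\varepsilon$ satisfy both Condition A and Condition C.
   Context: $\Gamma$ is a finite connected undirected graph without loops or multiple edges, distance-regular with diameter $D$, intersection numbers $a_i,b_i,c_i$ ($c_0=0$, $b_D=0$, $c_1=1$), valency $k=b_0$, $c_i+a_i+b_i=k$. For $\theta\in\mathbb{R}$ the pseudo cosine sequence for $\theta$ is the sequence of reals $\sigma_0,\dots,\sigma_D$ with $\sigma_0=1$ and $c_i\sigma_{i-1}+a_i\sigma_i+b_i\sigma_{i+1}=\theta\sigma_i$ for $0\le i\le D-1$; then $\theta=k\sigma_1$. The trivial pseudo cosine sequence is the one for $\theta=k$ (all terms equal $1$); a pseudo cosine sequence is nontrivial if $\sigma_1\neq 1$. Pseudo cosine sequences $\sigma_i$, $\rho_i$ form a tight pair if $(\sigma_i\rho_i)_{i=0}^D$ is a pseudo cosine sequence. For a tight pair of nontrivial pseudo cosine sequences, an auxiliary parameter is a real $\varepsilon$ with $\sigma_i\rho_i-\sigma_{i-1}\rho_{i-1}=\varepsilon(\sigma_{i-1}\rho_i-\sigma_i\rho_{i-1})$ for $1\le i\le D$. When $a_1\neq0$, a nontrivial pseudo cosine sequence $\sigma_0,\dots,\sigma_D$ is called tight if there exists a nontrivial pseudo cosine sequence $\rho_0,\dots,\rho_D$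 such that the two form a tight pair; the auxiliary parameter of $\sigma_0,\dots,\sigma_D$ is the auxiliary parameter of this tight pair (which is uniquely determined in this situation). *)

theory Defs
  imports Complex_Main
begin

definition simple_graph :: "'a set \<Rightarrow> ('a \<Rightarrow> 'a \<Rightarrow> bool) \<Rightarrow> bool" where
  "simple_graph V E \<longleftrightarrow> finite V \<and> V \<noteq> {} \<and>
     (\<forall>x y. E x y \<longrightarrow> x \<in> V \<and> y \<in> V) \<and>
     (\<forall>x y. E x y \<longrightarrow> E y x) \<and> (\<forall>x. \<not> E x x)"

definition adj_rel :: "('a \<Rightarrow> 'a \<Rightarrow> bool) \<Rightarrow> ('a \<times> 'a) set" where
  "adj_rel E = {(x, y). E x y}"

definition graph_connected :: "'a set \<Rightarrow> ('a \<Rightarrow> 'a \<Rightarrow> bool) \<Rightarrow> bool" where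
  "graph_connected V E \<longleftrightarrow> (\<forall>x\<in>V. \<forall>y\<in>V. \<exists>n. (x, y) \<in> adj_rel E ^^ n)"

definition gdist :: "('a \<Rightarrow> 'a \<Rightarrow> bool) \<Rightarrow> 'a \<Rightarrow> 'a \<Rightarrow> nat" where
  "gdist E x y = (LEAST n. (x, y) \<in> adj_rel E ^^ n)"

definition diameter :: "'a set \<Rightarrow> ('a \<Rightarrow> 'a \<Rightarrow> bool) \<Rightarrow> nat" where
  "diameter V E = Max {gdist E x y | x y. x \<in> V \<and> y \<in> V}"

text \<open>Distance-regular graph with intersection numbers a, b, c: a finite connected
simple graph such that for all vertices x, y at distance i, the number of neighbours
z of y at distance i-1, i, i+1 from x equals c i, a i, b i respectively.
(For i = 0 the count c 0 is automatically 0.) The values of a, b, c at indices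
beyond the diameter are irrelevant.\<close>
definition distance_regular ::
  "'a set \<Rightarrow> ('a \<Rightarrow> 'a \<Rightarrow> bool) \<Rightarrow> (nat \<Rightarrow> nat) \<Rightarrow> (nat \<Rightarrow> nat) \<Rightarrow> (nat \<Rightarrow> nat) \<Rightarrow> bool" where
  "distance_regular V E a b c \<longleftrightarrow> simple_graph V E \<and> graph_connected V E \<and>
     (\<forall>x\<in>V. \<forall>y\<in>V.
        c (gdist E x y) = card {z \<in> V. E y z \<and> gdist E x z + 1 = gdist E x y} \<and>
        a (gdist E x y) = card {z \<in> V. E y z \<and> gdist E x z = gdist E x y} \<and>
        b (gdist E x y) = card {z \<in> V. E y z \<and> gdist E x z = gdist E x y + 1})"

definition pseudo_cosine_for ::
  "(nat \<Rightarrow> nat) \<Rightarrow> (nat \<Rightarrow> nat) \<Rightarrow> (nat \<Rightarrow> nat) \<Rightarrow> nat \<Rightarrow> real \<Rightarrow> (nat \<Rightarrow> real) \<Rightarrow> bool" where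
  "pseudo_cosine_for a b c D \<theta> \<sigma> \<longleftrightarrow> \<sigma> 0 = 1 \<and>
     (\<forall>i<D. real (c i) * (if i = 0 then 0 else \<sigma> (i - 1)) + real (a i) * \<sigma> i
             + real (b i) * \<sigma> (i + 1) = \<theta> * \<sigma> i)"

definition pseudo_cosine ::
  "(nat \<Rightarrow> nat) \<Rightarrow> (nat \<Rightarrow> nat) \<Rightarrow> (nat \<Rightarrow> nat) \<Rightarrow> nat \<Rightarrow> (nat \<Rightarrow> real) \<Rightarrow> bool" where
  "pseudo_cosine a b c D \<sigma> \<longleftrightarrow> (\<exists>\<theta>. pseudo_cosine_for a b c D \<theta> \<sigma>)"

definition nontrivial_pseudo_cosine ::
  "(nat \<Rightarrow> nat) \<Rightarrow> (nat \<Rightarrow> nat) \<Rightarrow> (nat \<Rightarrow> nat) \<Rightarrow> nat \<Rightarrow> (nat \<Rightarrow> real) \<Rightarrow> bool" where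
  "nontrivial_pseudo_cosine a b c D \<sigma> \<longleftrightarrow> pseudo_cosine a b c D \<sigma> \<and> \<sigma> 1 \<noteq> 1"

definition tight_pair ::
  "(nat \<Rightarrow> nat) \<Rightarrow> (nat \<Rightarrow> nat) \<Rightarrow> (nat \<Rightarrow> nat) \<Rightarrow> nat \<Rightarrow> (nat \<Rightarrow> real) \<Rightarrow> (nat \<Rightarrow> real) \<Rightarrow> bool" where
  "tight_pair a b c D \<sigma> \<rho> \<longleftrightarrow> pseudo_cosine a b c D \<sigma> \<and> pseudo_cosine a b c D \<rho> \<and>
     pseudo_cosine a b c D (\<lambda>i. \<sigma> i * \<rho> i)"

definition auxiliary_parameter :: "nat \<Rightarrow> (nat \<Rightarrow> real) \<Rightarrow> (nat \<Rightarrow> real) \<Rightarrow> real \<Rightarrow> bool" where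
  "auxiliary_parameter D \<sigma> \<rho> \<epsilon> \<longleftrightarrow>
     (\<forall>i\<in>{1..D}. \<sigma> i * \<rho> i - \<sigma> (i - 1) * \<rho> (i - 1)
                  = \<epsilon> * (\<sigma> (i - 1) * \<rho> i - \<sigma> i * \<rho> (i - 1)))"

definition tight_with_aux ::
  "(nat \<Rightarrow> nat) \<Rightarrow> (nat \<Rightarrow> nat) \<Rightarrow> (nat \<Rightarrow> nat) \<Rightarrow> nat \<Rightarrow> (nat \<Rightarrow> real) \<Rightarrow> real \<Rightarrow> bool" where
  "tight_with_aux a b c D \<sigma> \<epsilon> \<longleftrightarrow> nontrivial_pseudo_cosine a b c D \<sigma> \<and>
     (\<exists>\<rho>. nontrivial_pseudo_cosine a b c D \<rho> \<and> tight_pair a b c D \<sigma> \<rho> \<and>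
          auxiliary_parameter D \<sigma> \<rho> \<epsilon>)"

definition condA :: "(nat \<Rightarrow> nat) \<Rightarrow> nat \<Rightarrow> (nat \<Rightarrow> real) \<Rightarrow> real \<Rightarrow> bool" where
  "condA a D \<sigma> \<epsilon> \<longleftrightarrow> \<epsilon> \<noteq> -1 \<and>
     (\<sigma> 1 ^ 2 - \<sigma> 2) * (1 - \<epsilon> * \<sigma> 1) \<noteq> 0 \<and>
     (\<forall>i\<in>{1..D-1}. (\<sigma> (i + 1) - \<sigma> i) * (\<sigma> (i - 1) - \<sigma> i) \<noteq> 0 \<and>
        real (a i) =
          ((\<epsilon> - 1) * (1 - \<sigma> 2) / ((\<sigma> 1 ^ 2 - \<sigma> 2) * (1 - \<epsilon> * \<sigma> 1))) *
          ((\<sigma> (i + 1) - \<sigma> 1 * \<sigma> i) * (\<sigma> (i - 1) - \<sigma> 1 * \<sigma> i)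
           / ((\<sigma> (i + 1) - \<sigma> i) * (\<sigma> (i - 1) - \<sigma> i))))"

definition h_param :: "(nat \<Rightarrow> real) \<Rightarrow> real \<Rightarrow> real" where
  "h_param \<sigma> \<epsilon> = (1 - \<sigma> 1) * (1 - \<sigma> 2) / ((\<sigma> 1 ^ 2 - \<sigma> 2) * (1 - \<epsilon> * \<sigma> 1))"

definition condB :: "(nat \<Rightarrow> nat) \<Rightarrow> nat \<Rightarrow> (nat \<Rightarrow> real) \<Rightarrow> real \<Rightarrow> bool" where
  "condB b D \<sigma> \<epsilon> \<longleftrightarrow>
     (\<sigma> 1 ^ 2 - \<sigma> 2) * (1 - \<epsilon> * \<sigma> 1) \<noteq> 0 \<and>
     (\<forall>i\<in>{1..D-1}. \<sigma> (i + 1) - \<sigma> i \<noteq> 0 \<and>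
        real (b i) * (\<sigma> (i - 1) - \<sigma> (i + 1)) =
          h_param \<sigma> \<epsilon> * ((\<sigma> (i - 1) - \<sigma> 1 * \<sigma> i) * (\<sigma> (i + 1) - \<epsilon> * \<sigma> i)
                         / (\<sigma> (i + 1) - \<sigma> i)))"

definition condC :: "(nat \<Rightarrow> nat) \<Rightarrow> (nat \<Rightarrow> nat) \<Rightarrow> nat \<Rightarrow> (nat \<Rightarrow> real) \<Rightarrow> real \<Rightarrow> bool" where
  "condC b c D \<sigma> \<epsilon> \<longleftrightarrow>
     (\<sigma> 1 ^ 2 - \<sigma> 2) * (1 - \<epsilon> * \<sigma> 1) \<noteq> 0 \<and> \<sigma> 1 - 1 \<noteq> 0 \<and>
     real (b 0) = h_param \<sigma> \<epsilon> * ((\<sigma> 1 - \<epsilon>) / (\<sigma> 1 - 1)) \<and>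
     (\<forall>i\<in>{1..D-1}. \<sigma> (i - 1) - \<sigma> i \<noteq> 0 \<and>
        real (c i) * (\<sigma> (i + 1) - \<sigma> (i - 1)) =
          h_param \<sigma> \<epsilon> * ((\<sigma> (i + 1) - \<sigma> 1 * \<sigma> i) * (\<sigma> (i - 1) - \<epsilon> * \<sigma> i)
                         / (\<sigma> (i - 1) - \<sigma> i)))"

end

theory Submission
  imports Defs
begin

(* Write s = sigma_1, k = b_0 and x, y, z for sigma_(i-1), sigma_i, sigma_(i+1). Once the valency
   formula k = h (s - eps)/(s - 1) holds, Condition A at i is the polynomial identity
   a_i (z - y)(x - y)(s - eps) = k (1 - eps)(z - s y)(x - s y), and eliminating a_i and
   c_i = k - a_i - b_i turns the three-term recurrence at i into the formula of Condition B, and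
   also into that of Condition C; at i = 1 the recurrence is the valency formula itself. This
   gives (ii) <-> (iii) <-> (iv).

   The auxiliary relation rho_i (sigma_i - eps sigma_(i-1)) = rho_(i-1) (sigma_(i-1) - eps sigma_i)
   says that (rho_(i-1), rho_i) is a multiple of (y - eps x, x - eps y). For (ii) -> (i), let rho
   be the pseudo cosine sequence with rho_1 = (1 - eps s)/(s - eps): Condition A propagates the
   relation from i to i + 1, and the relation makes sigma rho satisfy the recurrence. For
   (i) -> (ii), the recurrences at i = 1, 2 rule out eps = 1, and by the symmetry
   (sigma, rho, eps) -> (rho, sigma, -eps) also eps = -1; substituting the relation into the
   recurrences for sigma, rho and sigma rho and eliminating then gives Condition A, by induction
   on i. The graph enters only through its intersection numbers, among them
   a_2 <> 0, which follows from a_1 <> 0 and D >= 3. *)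

section \<open>One step of the three-term recurrence\<close>

(* x, y, z stand for sigma_(i-1), sigma_i, sigma_(i+1), s for sigma_1, k for b_0, e for eps and
   r for rho_1; rho_(i-1), rho_i, rho_(i+1) are l (y - e x), l (x - e y) and w. *)
context
  fixes a b c k s e r x y z l w :: real
  assumes abc: "a + b + c = k"
    and rec_sigma: "c*x + a*y + b*z = k*s*y"
    and rec_rho: "c*(l*(y-e*x)) + a*(l*(x-e*y)) + b*w = k*r*(l*(x-e*y))"
    and rho_1: "r*(s-e) = 1 - e*s"
begin

lemma rec_rho_scaled:
  "(s-e)*(b*w) = k*(1-e*s)*(l*(x-e*y)) - (s-e)*(c*(l*(y-e*x)) + a*(l*(x-e*y)))"
proof -
  have "(s-e)*(b*w) = k*(r*(s-e))*(l*(x-e*y)) - (s-e)*(c*(l*(y-e*x)) + a*(l*(x-e*y)))"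
    using rec_rho by algebra
  then show ?thesis unfolding rho_1 .
qed

lemma aux_relation_step:
  assumes A: "a*(z-y)*(x-y)*(s-e) = k*(1-e)*(z-s*y)*(x-s*y)"
    and "s \<noteq> e" "b \<noteq> 0" "z \<noteq> y"
  shows "w*(z-e*y) = l*(x-e*y)*(y-e*z)"
proof -
  have c: "c = k - a - b" using abc by simp
  have rec_b: "b*(z-x) = k*(s*y-x) - a*(y-x)"
    using rec_sigma unfolding c by (simp add: algebra_simps)
  have scaled: "(s-e)*b*(w*(z-e*y) - (l*(x-e*y))*(y-e*z))
      = l*(1+e)*((z-e*y)*(k*(1-e)*(x-s*y) - (s-e)*a*(x-y)) + (s-e)*(1-e)*y*(b*(z-x)))"
    using rec_rho_scaled unfolding c by algebra
  have condA_scaled: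
    "(z-y)*((z-e*y)*(k*(1-e)*(x-s*y) - (s-e)*a*(x-y)) + (s-e)*(1-e)*y*(k*(s*y-x) - a*(y-x))) = 0"
    using A by algebra
  have "(z-y)*((s-e)*b*(w*(z-e*y) - (l*(x-e*y))*(y-e*z))) = 0"
    using scaled condA_scaled rec_b by (metis mult.left_commute mult_zero_right)
  then show ?thesis using assms(2-4) by simp
qed

lemma product_recurrence_step:
  assumes A: "a*(z-y)*(x-y)*(s-e) = k*(1-e)*(z-s*y)*(x-s*y)" and "s \<noteq> e"
  shows "c*x*(l*(y-e*x)) + a*y*(l*(x-e*y)) + b*z*w = k*(s*r)*y*(l*(x-e*y))"
proof -
  have b: "b = k - a - c" using abc by simp
  have rec_c: "c*(x-z) = a*(z-y) - k*(z-s*y)"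
    using rec_sigma unfolding b by (simp add: algebra_simps)
  have scaled: "(s-e)*(c*x*(l*(y-e*x)) + a*y*(l*(x-e*y)) + b*z*w) - k*s*(1-e*s)*y*(l*(x-e*y))
     = l*((s-e)*((y-e*x)*(c*(x-z)) + a*(x-e*y)*(y-z)) + k*(1-e*s)*(x-e*y)*(z-s*y))"
    using rec_rho_scaled by algebra
  have condA_scaled:
    "(s-e)*((y-e*x)*(a*(z-y) - k*(z-s*y)) + a*(x-e*y)*(y-z)) + k*(1-e*s)*(x-e*y)*(z-s*y) = 0"
    using A by algebra
  have "(s-e)*(c*x*(l*(y-e*x)) + a*y*(l*(x-e*y)) + b*z*w) - k*s*(1-e*s)*y*(l*(x-e*y)) = 0"
    using scaled condA_scaled rec_c by simp
  then have "(s-e)*(c*x*(l*(y-e*x)) + a*y*(l*(x-e*y)) + b*z*w) = (s-e)*(k*(s*r)*y*(l*(x-e*y)))"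
    using rho_1 by algebra
  then show ?thesis using assms(2) by simp
qed

lemma condA_poly_step:
  assumes T: "c*x*(l*(y-e*x)) + a*y*(l*(x-e*y)) + b*z*w = k*(s*r)*y*(l*(x-e*y))"
    and "l \<noteq> 0" "e \<noteq> -1" "b \<noteq> 0"
  shows "a*(z-y)*(x-y)*(s-e) = k*(1-e)*(z-s*y)*(x-s*y)"
proof -
  define p where "p = l*(y-e*x)"
  define q where "q = l*(x-e*y)"
  have c: "c = k - a - b" using abc by simp
  have rec_sigma_b: "b*(z-x) = a*(x-y) - k*(x-s*y)" using rec_sigma unfolding c by algebra
  have rec_rho_b: "b*(w-p) = k*(r*q-p) - a*(q-p)" using rec_rho unfolding c p_def q_def by algebra
  have rec_product_b: "a*(y-x)*(q-p) + b*(z-x)*(w-p) = k*(s*y-x)*(r*q-p)"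
    using T rec_rho rec_sigma unfolding c p_def q_def by algebra
  have q_p: "q - p = l*(1+e)*(x-y)" unfolding p_def q_def by algebra
  have rq_p: "(s-e)*(r*q-p) = l*(1-e^2)*(x-s*y)" unfolding p_def q_def using rho_1 by algebra
  have rec_rho_scaled_b: "(s-e)*(b*(w-p)) = l*(1+e)*(k*(1-e)*(x-s*y) - (s-e)*a*(x-y))"
    using rec_rho_b q_p rq_p by algebra
  have "(s-e)*b*(a*(y-x)*(q-p) + b*(z-x)*(w-p)) = (s-e)*b*(k*(s*y-x)*(r*q-p))"
    using rec_product_b by simp
  then have "(s-e)*b*a*(y-x)*(q-p) + (b*(z-x))*((s-e)*(b*(w-p))) = b*k*(s*y-x)*((s-e)*(r*q-p))"
    by (simp add: algebra_simps)
  then have quadratic: "l*(1+e)*(-(s-e)*a*b*(x-y)^2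
      + (a*(x-y) - k*(x-s*y))*((1-e)*k*(x-s*y) - (s-e)*a*(x-y)) + b*(1-e)*k*(x-s*y)^2) = 0"
    unfolding rec_sigma_b rec_rho_scaled_b q_p rq_p by algebra
  have condA_defect: "b*(a*(z-y)*(x-y)*(s-e) - k*(1-e)*(z-s*y)*(x-s*y)) = -(-(s-e)*a*b*(x-y)^2
      + (a*(x-y) - k*(x-s*y))*((1-e)*k*(x-s*y) - (s-e)*a*(x-y)) + b*(1-e)*k*(x-s*y)^2)"
    using rec_sigma_b by algebra
  have "l*(1+e)*(b*(a*(z-y)*(x-y)*(s-e) - k*(1-e)*(z-s*y)*(x-s*y))) = 0"
    unfolding condA_defect mult_minus_right quadratic by simp
  moreover have "1 + e \<noteq> 0" using assms(3) by (metis add.commute add_eq_0_iff)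
  ultimately show ?thesis using assms(2,4) by simp
qed

end

lemma eq_mult_divide_iff:
  fixes a g F G :: real
  assumes "G \<noteq> 0"
  shows "a = g * (F / G) \<longleftrightarrow> a * G = g * F"
  using assms by (auto simp: field_simps)

(* N is the common denominator of Conditions A-C, g the prefactor of Condition A and h = h_param. *)
context
  fixes s t e N g h :: real
  defines "N \<equiv> (s^2 - t) * (1 - e*s)"
  defines "g \<equiv> (e - 1) * (1 - t) / N"
  defines "h \<equiv> (1 - s) * (1 - t) / N"
begin

lemma valency_of_valency_poly:
  assumes "N \<noteq> 0" "s \<noteq> 1" "(1-t)*(s-e) = k*(t-s^2)*(1-e*s)"
  shows "k = h * ((s-e)/(s-1))"
proof -
  have "k * (N * (s-1)) = (1-s)*(1-t)*(s-e)" using assms(3) unfolding N_def by algebra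
  then show ?thesis unfolding h_def using assms(1,2) by (simp add: field_simps)
qed

lemma condA_step_iff_poly:
  assumes "N \<noteq> 0" "s \<noteq> 1" "s \<noteq> e" "z \<noteq> y" "x \<noteq> y" and k: "k = h * ((s-e)/(s-1))"
  shows "a = g * ((z-s*y)*(x-s*y)/((z-y)*(x-y))) \<longleftrightarrow> a*(z-y)*(x-y)*(s-e) = k*(1-e)*(z-s*y)*(x-s*y)"
proof -
  have gk: "g*(s-e) = k*(1-e)"
    unfolding k g_def h_def using assms(1,2) by (simp add: field_simps)
  have "a = g * ((z-s*y)*(x-s*y)/((z-y)*(x-y))) \<longleftrightarrow> a*((z-y)*(x-y)) = g*((z-s*y)*(x-s*y))"
    by (rule eq_mult_divide_iff) (use assms(4,5) in simp)
  also have "\<dots> \<longleftrightarrow> a*((z-y)*(x-y))*(s-e) = g*(s-e)*((z-s*y)*(x-s*y))"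
    using assms(3) by auto
  finally show ?thesis unfolding gk by (simp add: ac_simps)
qed

lemma recurrence_step_iff_condB_condC_step:
  assumes abc: "a + b + c = k" and "N \<noteq> 0" "s \<noteq> 1" "z \<noteq> y" "x \<noteq> y"
    and A: "a = g * ((z-s*y)*(x-s*y)/((z-y)*(x-y)))" and k: "k = h * ((s-e)/(s-1))"
  shows "c*x + a*y + b*z = k*s*y \<longleftrightarrow> b*(x-z) = h * ((x-s*y)*(z-e*y)/(z-y))"
    and "c*x + a*y + b*z = k*s*y \<longleftrightarrow> c*(z-x) = h * ((z-s*y)*(x-e*y)/(x-y))"
proof -
  have A': "a*((z-y)*(x-y)) = g*((z-s*y)*(x-s*y))"
    using A eq_mult_divide_iff assms(4,5) by simp
  have k': "k*(s-1) = h*(s-e)" using k assms(3) by simp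
  have gh: "g*(1-s) = h*(e-1)" unfolding g_def h_def by simp
  have "(s-1)*((k*(x-s*y) - a*(x-y))*(z-y)) = (s-1)*(h*((x-s*y)*(z-e*y)))"
    using A' k' gh by algebra
  then have "k*(x-s*y) - a*(x-y) = h * ((x-s*y)*(z-e*y)/(z-y))"
    using assms(3,4) eq_mult_divide_iff by simp
  moreover have "c*x + a*y + b*z = k*s*y \<longleftrightarrow> b*(x-z) = k*(x-s*y) - a*(x-y)"
    using abc by (auto simp: algebra_simps)
  ultimately show "c*x + a*y + b*z = k*s*y \<longleftrightarrow> b*(x-z) = h * ((x-s*y)*(z-e*y)/(z-y))"
    by simp
  have "(s-1)*((k*(z-s*y) - a*(z-y))*(x-y)) = (s-1)*(h*((z-s*y)*(x-e*y)))"
    using A' k' gh by algebra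
  then have "k*(z-s*y) - a*(z-y) = h * ((z-s*y)*(x-e*y)/(x-y))"
    using assms(3,5) eq_mult_divide_iff by simp
  moreover have "c*x + a*y + b*z = k*s*y \<longleftrightarrow> c*(z-x) = k*(z-s*y) - a*(z-y)"
    using abc by (auto simp: algebra_simps)
  ultimately show "c*x + a*y + b*z = k*s*y \<longleftrightarrow> c*(z-x) = h * ((z-s*y)*(x-e*y)/(x-y))"
    by simp
qed

lemma step_1_iff_valency:
  assumes abc: "a + b + 1 = k" and N: "N \<noteq> 0" and "s \<noteq> 1" "t \<noteq> s" "t \<noteq> 1"
    and A: "a = g * ((t-s*s)*(1-s*s)/((t-s)*(1-s)))"
  shows "1 + a*s + b*t = k*s*s \<longleftrightarrow> k = h * ((s-e)/(s-1))"
    and "b*(1-t) = h * ((1-s*s)*(t-e*s)/(t-s)) \<longleftrightarrow> k = h * ((s-e)/(s-1))"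
proof -
  define K where "K = h * ((s-e)/(s-1))"
  have A': "a*((t-s)*(1-s)) = g*((t-s*s)*(1-s*s))"
    using A eq_mult_divide_iff assms(3,4) by simp
  have K': "K*(s-1) = h*(s-e)" unfolding K_def using assms(3) by simp
  have gN: "g*((s^2 - t)*(1-e*s)) = (e-1)*(1-t)" and hN: "h*((s^2 - t)*(1-e*s)) = (1-s)*(1-t)"
    using N unfolding g_def h_def N_def by simp_all
  have "(s-1)*(1-s)*(t-s)*((s^2 - t)*(1-e*s))*(a*(t-s) - (1-t))
      = (s-1)*(1-s)*(t-s)*((s^2 - t)*(1-e*s))*(K*(t-s^2))"
    using A' K' gN hN by algebra
  then have a: "a*(t-s) - (1-t) = K*(t-s^2)" using N assms(3,4) unfolding N_def by simp
  have "1 + a*s + b*t - k*s*s = k*(t - s^2) - (a*(t-s) - (1-t))"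
    using abc by (auto simp: algebra_simps power2_eq_square)
  also have "\<dots> = (k - K)*(t - s^2)" unfolding a by (simp add: algebra_simps)
  finally have "1 + a*s + b*t - k*s*s = (k - K)*(t - s^2)" .
  moreover have "t - s^2 \<noteq> 0" using N unfolding N_def by auto
  ultimately show "1 + a*s + b*t = k*s*s \<longleftrightarrow> k = K" by auto
  have "(s-1)*((K - a - 1)*(1-t)*(t-s)) = (s-1)*(h*((1-s*s)*(t-e*s)))"
    using a K' hN by algebra
  then have "(K - a - 1)*(1-t) = h * ((1-s*s)*(t-e*s)/(t-s))"
    using assms(3,4) eq_mult_divide_iff by simp
  then have "b*(1-t) = h * ((1-s*s)*(t-e*s)/(t-s)) \<longleftrightarrow> b*(1-t) = (K - a - 1)*(1-t)" by simp
  also have "\<dots> \<longleftrightarrow> b = K - a - 1" using assms(5) by simp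
  also have "\<dots> \<longleftrightarrow> k = K" using abc by auto
  finally show "b*(1-t) = h * ((1-s*s)*(t-e*s)/(t-s)) \<longleftrightarrow> k = K" .
qed

lemma valency_poly_of_step_1:
  assumes "k = 1 + a + b" "1 + a*s + b*t = k*s*s" "s \<noteq> 1"
    and "a*(t-s)*(1-s)*(s-e) = k*(1-e)*(t-s*s)*(1-s*s)"
  shows "(1-t)*(s-e) = k*(t-s^2)*(1-e*s)"
proof -
  have "a*(t-s) = (1-t) + k*(t-s*s)" using assms(1,2) by algebra
  then have "(1-s)*((1-t)*(s-e)) = (1-s)*(k*(t-s^2)*(1-e*s))" using assms(4) by algebra
  then show ?thesis using assms(3) by simp
qed

lemma denominator_ne_0:
  assumes "(1-t)*(s-e) = k*(t-s^2)*(1-e*s)" "s \<noteq> e" "s \<noteq> 1" "a1 \<noteq> 0" "a2 \<noteq> 0"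
    and "a1*(t-s)*(1-s)*(s-e) = k*(1-e)*(t-s*s)*(1-s*s)"
    and "a2*(s3-t)*(s-t)*(s-e) = k*(1-e)*(s3-s*t)*(s-s*t)"
    and "s3 \<noteq> t" "t \<noteq> s"
  shows "N \<noteq> 0"
proof
  assume N0: "N = 0"
  moreover have "k*(t-s^2)*(1-e*s) = -k*N" unfolding N_def by algebra
  ultimately have "(1-t)*(s-e) = 0" using assms(1) by simp
  then have t: "t = 1" using assms(2) by simp
  show False
  proof (cases "s = -1")
    case True
    then show False using assms(2,4,6) t by simp
  next
    case False
    then have "s^2 - t \<noteq> 0" using t assms(3) by (simp add: power2_eq_1_iff)
    then have "1 - e*s = 0" using N0 unfolding N_def by simp
    then show False using assms(2,5,7-9) t by simp
  qed
qed

end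

lemma condA_poly_next_ne:
  fixes a b c k s e x y z :: real
  assumes "a + b + c = k" "c*x + a*y + b*z = k*s*y"
    and A: "a*(z-y)*(x-y)*(s-e) = k*(1-e)*(z-s*y)*(x-s*y)"
    and "0 \<le> a" "0 < b" "0 < c" "e \<noteq> 1" "s \<noteq> 1" "x \<noteq> y"
  shows "z \<noteq> y"
proof
  assume zy: "z = y"
  have "k \<noteq> 0" using assms(1,4-6) by linarith
  moreover have "k*(1-e)*(y*(1-s)*(x-s*y)) = 0" using A zy by (simp add: algebra_simps)
  ultimately have "y = 0 \<or> x - s*y = 0" using assms(7,8) by simp
  then show False
  proof
    assume "y = 0"
    then have "c*x = 0" using assms(2) zy by simp
    then show False using \<open>y = 0\<close> assms(6,9) by simp
  next
    assume "x - s*y = 0"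
    then have "(a+b)*(y-x) = 0" using assms(1,2) zy by algebra
    then show False using assms(4,5,9) by simp
  qed
qed

lemma aux_relation_multiple:
  fixes x y p q e :: real
  assumes "e \<noteq> 1" "e \<noteq> -1" "x \<noteq> y" and aux: "q*(y-e*x) = p*(x-e*y)"
  obtains l where "p = l*(y-e*x)" "q = l*(x-e*y)"
proof (cases "x - e*y = 0")
  case False
  then show ?thesis using aux that[of "q/(x-e*y)"] by (simp add: field_simps)
next
  case True
  have "e*e \<noteq> 1" using assms(1,2) square_eq_1_iff by blast
  then have "1 - e*e \<noteq> 0" by simp
  moreover have "y \<noteq> 0" using True assms(3) by auto
  moreover have "y - e*x = y*(1-e*e)" using True by algebra
  ultimately have "y - e*x \<noteq> 0" by simp
  then show ?thesis using aux True that[of "p/(y-e*x)"] by simp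
qed

(* With e = 1 the auxiliary relations force r1 = -1, hence r2 > 1, s2 = s1, k s1 = -1 and
   r3 = -r2, which the second recurrence for rho cannot accommodate. *)
lemma aux_parameter_ne_1:
  fixes k a1 b1 a2 b2 c2 s1 s2 s3 r1 r2 r3 e :: real
  assumes "k = 1 + a1 + b1" "0 < a1" "0 < b1" "k = a2 + b2 + c2" "0 \<le> a2" "0 < b2" "0 < c2"
    and rec_s1: "1 + a1*s1 + b1*s2 = k*s1*s1" and rec_r1: "1 + a1*r1 + b1*r2 = k*r1*r1"
    and rec_s2: "c2*s1 + a2*s2 + b2*s3 = k*s1*s2" and rec_r2: "c2*r1 + a2*r2 + b2*r3 = k*r1*r2"
    and aux1: "s1*r1 - 1 = e*(r1 - s1)" and aux2: "s2*r2 - s1*r1 = e*(s1*r2 - s2*r1)"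
    and aux3: "s3*r3 - s2*r2 = e*(s2*r3 - s3*r2)"
    and "s1 \<noteq> 1"
  shows "e \<noteq> 1"
proof
  assume e: "e = 1"
  have "(s1-1)*(r1+1) = 0" using aux1 e by (simp add: algebra_simps)
  then have r1: "r1 = -1" using \<open>s1 \<noteq> 1\<close> by simp
  have "b1*(r2-1) = 2*a1" using rec_r1 r1 assms(1) by (simp add: algebra_simps)
  then have "0 < b1*(r2-1)" using assms(2) by simp
  then have r2: "r2 > 1" using assms(3) by (simp add: zero_less_mult_iff)
  moreover have "(s2-s1)*(r2-1) = 0" using aux2 e r1 by (simp add: algebra_simps)
  ultimately have s2: "s2 = s1" by simp
  have "(1-s1)*(1+k*s1) = 0" using rec_s1 s2 assms(1) by (simp add: algebra_simps)
  then have ks1: "k*s1 = -1" using \<open>s1 \<noteq> 1\<close> by simp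
  have "s3 \<noteq> s2"
  proof
    assume "s3 = s2"
    then have "s1*(b2 + 1 + c2 + a2) = 0" using rec_s2 s2 ks1 by (simp add: algebra_simps)
    then show False using ks1 assms(5-7) by auto
  qed
  moreover have "(s3-s2)*(r3+r2) = 0" using aux3 e by (simp add: algebra_simps)
  ultimately have r3: "r3 = -r2" by simp
  have "r2*(2*a2 + c2) = c2" using rec_r2 r1 r3 assms(4) by (simp add: algebra_simps)
  moreover have "r2*(2*a2 + c2) > 1*(2*a2 + c2)"
    using r2 assms(5,7) by (intro mult_strict_right_mono) auto
  ultimately show False using assms(5) by simp
qed

section \<open>Conditions A, B and C over an intersection array\<close>

definition cosine_recurrence ::
  "(nat \<Rightarrow> nat) \<Rightarrow> (nat \<Rightarrow> nat) \<Rightarrow> (nat \<Rightarrow> nat) \<Rightarrow> nat \<Rightarrow> (nat \<Rightarrow> real) \<Rightarrow> bool" where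
  "cosine_recurrence a b c D \<sigma> \<longleftrightarrow>
     (\<forall>i\<in>{1..D-1}. real (c i) * \<sigma> (i-1) + real (a i) * \<sigma> i + real (b i) * \<sigma> (i+1)
                   = real (b 0) * \<sigma> 1 * \<sigma> i)"

fun cosine_seq :: "(nat \<Rightarrow> nat) \<Rightarrow> (nat \<Rightarrow> nat) \<Rightarrow> (nat \<Rightarrow> nat) \<Rightarrow> real \<Rightarrow> nat \<Rightarrow> real" where
  "cosine_seq a b c r 0 = 1"
| "cosine_seq a b c r (Suc 0) = r"
| "cosine_seq a b c r (Suc (Suc n)) =
     (real (b 0) * r * cosine_seq a b c r (Suc n) - real (c (Suc n)) * cosine_seq a b c r n
      - real (a (Suc n)) * cosine_seq a b c r (Suc n)) / real (b (Suc n))"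

lemma auxiliary_parameter_iff:
  "auxiliary_parameter D \<sigma> \<rho> \<epsilon> \<longleftrightarrow>
     (\<forall>i\<in>{1..D}. \<rho> i * (\<sigma> i - \<epsilon> * \<sigma> (i-1)) = \<rho> (i-1) * (\<sigma> (i-1) - \<epsilon> * \<sigma> i))"
  unfolding auxiliary_parameter_def by (simp add: algebra_simps)

locale intersection_array =
  fixes a b c :: "nat \<Rightarrow> nat" and D :: nat
  assumes diameter_ge_3: "3 \<le> D"
    and a_0: "a 0 = 0" and c_1: "c 1 = 1" and a_1: "a 1 \<noteq> 0" and a_2: "a 2 \<noteq> 0"
    and intersection_numbers_sum: "i \<in> {1..D-1} \<Longrightarrow> a i + b i + c i = b 0"
    and b_pos: "i < D \<Longrightarrow> 0 < b i"
    and c_pos: "i \<in> {1..D-1} \<Longrightarrow> 0 < c i"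
begin

lemma real_intersection_numbers_sum:
  "i \<in> {1..D-1} \<Longrightarrow> real (a i) + real (b i) + real (c i) = real (b 0)"
  using intersection_numbers_sum by (metis of_nat_add)

lemma pseudo_cosine_iff: "pseudo_cosine a b c D \<sigma> \<longleftrightarrow> \<sigma> 0 = 1 \<and> cosine_recurrence a b c D \<sigma>"
proof
  assume "pseudo_cosine a b c D \<sigma>"
  then obtain \<theta> where "pseudo_cosine_for a b c D \<theta> \<sigma>" unfolding pseudo_cosine_def ..
  then have \<sigma>0: "\<sigma> 0 = 1" and rec: "\<And>i. i < D \<Longrightarrow> real (c i) * (if i = 0 then 0 else \<sigma> (i - 1))
      + real (a i) * \<sigma> i + real (b i) * \<sigma> (i + 1) = \<theta> * \<sigma> i"
    unfolding pseudo_cosine_for_def by auto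
  have "\<theta> = real (b 0) * \<sigma> 1" using rec[of 0] diameter_ge_3 a_0 \<sigma>0 by simp
  moreover have "real (c i) * \<sigma> (i-1) + real (a i) * \<sigma> i + real (b i) * \<sigma> (i+1) = \<theta> * \<sigma> i"
    if "i \<in> {1..D-1}" for i
    using rec[of i] that by auto
  ultimately show "\<sigma> 0 = 1 \<and> cosine_recurrence a b c D \<sigma>"
    unfolding cosine_recurrence_def using \<sigma>0 by simp
next
  assume "\<sigma> 0 = 1 \<and> cosine_recurrence a b c D \<sigma>"
  then show "pseudo_cosine a b c D \<sigma>"
    unfolding pseudo_cosine_def pseudo_cosine_for_def cosine_recurrence_def
    using a_0 by (intro exI[of _ "real (b 0) * \<sigma> 1"]) (auto simp: not_less_eq_eq)
qed

definition valency_condition :: "(nat \<Rightarrow> real) \<Rightarrow> real \<Rightarrow> bool" where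
  "valency_condition \<sigma> \<epsilon> \<longleftrightarrow> real (b 0) = h_param \<sigma> \<epsilon> * ((\<sigma> 1 - \<epsilon>) / (\<sigma> 1 - 1))"

lemma condA_at:
  assumes "condA a D \<sigma> \<epsilon>" "i \<in> {1..D-1}"
  shows "\<sigma> (i+1) \<noteq> \<sigma> i" "\<sigma> (i-1) \<noteq> \<sigma> i"
    and "real (a i) = (\<epsilon> - 1) * (1 - \<sigma> 2) / ((\<sigma> 1 ^ 2 - \<sigma> 2) * (1 - \<epsilon> * \<sigma> 1)) *
           ((\<sigma> (i+1) - \<sigma> 1 * \<sigma> i) * (\<sigma> (i-1) - \<sigma> 1 * \<sigma> i) / ((\<sigma> (i+1) - \<sigma> i) * (\<sigma> (i-1) - \<sigma> i)))"
  using assms unfolding condA_def by auto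

lemma condA_at_1:
  assumes "\<sigma> 0 = 1" "condA a D \<sigma> \<epsilon>"
  shows "\<sigma> 2 \<noteq> \<sigma> 1" "\<sigma> 1 \<noteq> 1"
    and "real (a 1) = (\<epsilon> - 1) * (1 - \<sigma> 2) / ((\<sigma> 1 ^ 2 - \<sigma> 2) * (1 - \<epsilon> * \<sigma> 1)) *
           ((\<sigma> 2 - \<sigma> 1 * \<sigma> 1) * (1 - \<sigma> 1 * \<sigma> 1) / ((\<sigma> 2 - \<sigma> 1) * (1 - \<sigma> 1)))"
proof -
  have "1 \<in> {1..D-1}" using diameter_ge_3 by simp
  from condA_at[OF assms(2) this] show "\<sigma> 2 \<noteq> \<sigma> 1" "\<sigma> 1 \<noteq> 1"
    and "real (a 1) = (\<epsilon> - 1) * (1 - \<sigma> 2) / ((\<sigma> 1 ^ 2 - \<sigma> 2) * (1 - \<epsilon> * \<sigma> 1)) *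
           ((\<sigma> 2 - \<sigma> 1 * \<sigma> 1) * (1 - \<sigma> 1 * \<sigma> 1) / ((\<sigma> 2 - \<sigma> 1) * (1 - \<sigma> 1)))"
    using assms(1) by (simp_all add: numeral_2_eq_2)
qed

lemma condA_nondegenerate:
  assumes "\<sigma> 0 = 1" "condA a D \<sigma> \<epsilon>"
  shows "\<sigma> 2 \<noteq> 1" "\<epsilon> \<noteq> 1" "\<epsilon> \<noteq> -1" "(\<sigma> 1 ^ 2 - \<sigma> 2) * (1 - \<epsilon> * \<sigma> 1) \<noteq> 0"
proof -
  show "\<sigma> 2 \<noteq> 1" "\<epsilon> \<noteq> 1" using condA_at_1(3)[OF assms] a_1 by auto
  show "\<epsilon> \<noteq> -1" "(\<sigma> 1 ^ 2 - \<sigma> 2) * (1 - \<epsilon> * \<sigma> 1) \<noteq> 0"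
    using assms(2) unfolding condA_def by auto
qed

lemma condA_step_1_iff_valency:
  assumes "\<sigma> 0 = 1" "condA a D \<sigma> \<epsilon>"
  shows "1 + real (a 1) * \<sigma> 1 + real (b 1) * \<sigma> 2 = real (b 0) * \<sigma> 1 * \<sigma> 1 \<longleftrightarrow> valency_condition \<sigma> \<epsilon>"
    and "real (b 1) * (1 - \<sigma> 2) = h_param \<sigma> \<epsilon> * ((1 - \<sigma> 1 * \<sigma> 1) * (\<sigma> 2 - \<epsilon> * \<sigma> 1) / (\<sigma> 2 - \<sigma> 1))
         \<longleftrightarrow> valency_condition \<sigma> \<epsilon>"
proof -
  have "real (a 1) + real (b 1) + 1 = real (b 0)"
    using real_intersection_numbers_sum[of 1] diameter_ge_3 c_1 by simp
  note step_1 = step_1_iff_valency[OF this condA_nondegenerate(4)[OF assms] condA_at_1(2)[OF assms]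
      condA_at_1(1)[OF assms] condA_nondegenerate(1)[OF assms] condA_at_1(3)[OF assms]]
  show "1 + real (a 1) * \<sigma> 1 + real (b 1) * \<sigma> 2 = real (b 0) * \<sigma> 1 * \<sigma> 1 \<longleftrightarrow> valency_condition \<sigma> \<epsilon>"
    and "real (b 1) * (1 - \<sigma> 2) = h_param \<sigma> \<epsilon> * ((1 - \<sigma> 1 * \<sigma> 1) * (\<sigma> 2 - \<epsilon> * \<sigma> 1) / (\<sigma> 2 - \<sigma> 1))
         \<longleftrightarrow> valency_condition \<sigma> \<epsilon>"
    using step_1 unfolding valency_condition_def h_param_def by simp_all
qed

lemma condA_step_iff_condB_condC_step:
  assumes "\<sigma> 0 = 1" "condA a D \<sigma> \<epsilon>" "valency_condition \<sigma> \<epsilon>" "i \<in> {1..D-1}"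
  shows "real (c i) * \<sigma> (i-1) + real (a i) * \<sigma> i + real (b i) * \<sigma> (i+1) = real (b 0) * \<sigma> 1 * \<sigma> i
      \<longleftrightarrow> real (b i) * (\<sigma> (i-1) - \<sigma> (i+1))
            = h_param \<sigma> \<epsilon> * ((\<sigma> (i-1) - \<sigma> 1 * \<sigma> i) * (\<sigma> (i+1) - \<epsilon> * \<sigma> i) / (\<sigma> (i+1) - \<sigma> i))"
    and "real (c i) * \<sigma> (i-1) + real (a i) * \<sigma> i + real (b i) * \<sigma> (i+1) = real (b 0) * \<sigma> 1 * \<sigma> i
      \<longleftrightarrow> real (c i) * (\<sigma> (i+1) - \<sigma> (i-1))
            = h_param \<sigma> \<epsilon> * ((\<sigma> (i+1) - \<sigma> 1 * \<sigma> i) * (\<sigma> (i-1) - \<epsilon> * \<sigma> i) / (\<sigma> (i-1) - \<sigma> i))"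
  using recurrence_step_iff_condB_condC_step[OF real_intersection_numbers_sum[OF assms(4)]
      condA_nondegenerate(4)[OF assms(1,2)] condA_at_1(2)[OF assms(1,2)]
      condA_at(1,2,3)[OF assms(2,4)] assms(3)[unfolded valency_condition_def h_param_def]]
  unfolding h_param_def by (simp_all add: algebra_simps)

lemma pseudo_cosine_iff_valency:
  assumes "\<sigma> 0 = 1" "condA a D \<sigma> \<epsilon>"
  shows "pseudo_cosine a b c D \<sigma> \<longleftrightarrow> valency_condition \<sigma> \<epsilon> \<and> cosine_recurrence a b c D \<sigma>"
proof -
  have "valency_condition \<sigma> \<epsilon>" if "cosine_recurrence a b c D \<sigma>"
  proof -
    have "1 \<in> {1..D-1}" using diameter_ge_3 by simp
    then have "real (c 1) * \<sigma> (1-1) + real (a 1) * \<sigma> 1 + real (b 1) * \<sigma> (1+1)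
        = real (b 0) * \<sigma> 1 * \<sigma> 1"
      using that unfolding cosine_recurrence_def by blast
    then show ?thesis
      using condA_step_1_iff_valency(1)[OF assms] assms(1) c_1 by (simp add: numeral_2_eq_2)
  qed
  then show ?thesis using pseudo_cosine_iff assms(1) by blast
qed

lemma condB_iff_valency:
  assumes "\<sigma> 0 = 1" "condA a D \<sigma> \<epsilon>"
  shows "condB b D \<sigma> \<epsilon> \<longleftrightarrow> valency_condition \<sigma> \<epsilon> \<and> cosine_recurrence a b c D \<sigma>"
proof
  assume B: "condB b D \<sigma> \<epsilon>"
  have "1 \<in> {1..D-1}" using diameter_ge_3 by simp
  then have "real (b 1) * (\<sigma> (1-1) - \<sigma> (1+1))
      = h_param \<sigma> \<epsilon> * ((\<sigma> (1-1) - \<sigma> 1 * \<sigma> 1) * (\<sigma> (1+1) - \<epsilon> * \<sigma> 1) / (\<sigma> (1+1) - \<sigma> 1))"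
    using B unfolding condB_def by blast
  then have valency: "valency_condition \<sigma> \<epsilon>"
    using condA_step_1_iff_valency(2)[OF assms] assms(1) by (simp add: numeral_2_eq_2)
  then show "valency_condition \<sigma> \<epsilon> \<and> cosine_recurrence a b c D \<sigma>"
    using B condA_step_iff_condB_condC_step(1)[OF assms valency]
    unfolding condB_def cosine_recurrence_def by blast
next
  assume "valency_condition \<sigma> \<epsilon> \<and> cosine_recurrence a b c D \<sigma>"
  then show "condB b D \<sigma> \<epsilon>"
    using condA_step_iff_condB_condC_step(1)[OF assms] condA_at(1)[OF assms(2)]
      condA_nondegenerate(4)[OF assms]
    unfolding condB_def cosine_recurrence_def by auto
qed

lemma condC_iff_valency:
  assumes "\<sigma> 0 = 1" "condA a D \<sigma> \<epsilon>"
  shows "condC b c D \<sigma> \<epsilon> \<longleftrightarrow> valency_condition \<sigma> \<epsilon> \<and> cosine_recurrence a b c D \<sigma>"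
proof
  assume C: "condC b c D \<sigma> \<epsilon>"
  then have valency: "valency_condition \<sigma> \<epsilon>" unfolding condC_def valency_condition_def by blast
  then show "valency_condition \<sigma> \<epsilon> \<and> cosine_recurrence a b c D \<sigma>"
    using C condA_step_iff_condB_condC_step(2)[OF assms valency]
    unfolding condC_def cosine_recurrence_def by blast
next
  assume "valency_condition \<sigma> \<epsilon> \<and> cosine_recurrence a b c D \<sigma>"
  then show "condC b c D \<sigma> \<epsilon>"
    using condA_step_iff_condB_condC_step(2)[OF assms] condA_at(2)[OF assms(2)]
      condA_nondegenerate(4)[OF assms] condA_at_1(2)[OF assms]
    unfolding condC_def cosine_recurrence_def valency_condition_def by auto
qed

lemma pseudo_cosine_cosine_seq: "pseudo_cosine a b c D (cosine_seq a b c r)"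
proof -
  have "cosine_recurrence a b c D (cosine_seq a b c r)"
    unfolding cosine_recurrence_def
  proof
    fix i assume i: "i \<in> {1..D-1}"
    then obtain n where "i = Suc n" by (cases i) auto
    moreover have "real (b i) \<noteq> 0" using b_pos i by auto
    ultimately show "real (c i) * cosine_seq a b c r (i-1) + real (a i) * cosine_seq a b c r i
        + real (b i) * cosine_seq a b c r (i+1)
        = real (b 0) * cosine_seq a b c r 1 * cosine_seq a b c r i"
      by (simp add: field_simps)
  qed
  then show ?thesis using pseudo_cosine_iff by simp
qed

lemma valency_sigma_ne_eps: "valency_condition \<sigma> \<epsilon> \<Longrightarrow> \<sigma> 1 \<noteq> \<epsilon>"
  using b_pos[of 0] diameter_ge_3 unfolding valency_condition_def by auto

lemma condA_poly_at:
  assumes "\<sigma> 0 = 1" "condA a D \<sigma> \<epsilon>" "valency_condition \<sigma> \<epsilon>" "i \<in> {1..D-1}"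
  shows "real (a i) * (\<sigma> (i+1) - \<sigma> i) * (\<sigma> (i-1) - \<sigma> i) * (\<sigma> 1 - \<epsilon>)
    = real (b 0) * (1 - \<epsilon>) * (\<sigma> (i+1) - \<sigma> 1 * \<sigma> i) * (\<sigma> (i-1) - \<sigma> 1 * \<sigma> i)"
  using condA_step_iff_poly[OF condA_nondegenerate(4)[OF assms(1,2)] condA_at_1(2)[OF assms(1,2)]
      valency_sigma_ne_eps[OF assms(3)] condA_at(1,2)[OF assms(2,4)]
      assms(3)[unfolded valency_condition_def h_param_def]]
    condA_at(3)[OF assms(2,4)]
  by simp

lemma aux_relation_of_condA:
  assumes "\<sigma> 0 = 1" "condA a D \<sigma> \<epsilon>" "valency_condition \<sigma> \<epsilon>" "cosine_recurrence a b c D \<sigma>"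
    and "cosine_recurrence a b c D \<rho>" "\<rho> 0 = 1" "\<rho> 1 * (\<sigma> 1 - \<epsilon>) = 1 - \<epsilon> * \<sigma> 1"
  shows "auxiliary_parameter D \<sigma> \<rho> \<epsilon>"
  unfolding auxiliary_parameter_iff
proof
  fix i assume "i \<in> {1..D}"
  then have "1 \<le> i" "i \<le> D" by auto
  then show "\<rho> i * (\<sigma> i - \<epsilon> * \<sigma> (i-1)) = \<rho> (i-1) * (\<sigma> (i-1) - \<epsilon> * \<sigma> i)"
  proof (induction i rule: nat_induct_at_least)
    case base
    then show ?case using assms(1,6,7) by (simp add: algebra_simps)
  next
    case (Suc i)
    then have i: "i \<in> {1..D-1}" by auto
    have IH: "\<rho> i * (\<sigma> i - \<epsilon> * \<sigma> (i-1)) = \<rho> (i-1) * (\<sigma> (i-1) - \<epsilon> * \<sigma> i)"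
      using Suc by simp
    obtain l where l: "\<rho> (i-1) = l * (\<sigma> i - \<epsilon> * \<sigma> (i-1))" "\<rho> i = l * (\<sigma> (i-1) - \<epsilon> * \<sigma> i)"
      by (rule aux_relation_multiple[OF condA_nondegenerate(2,3)[OF assms(1,2)]
            condA_at(2)[OF assms(2) i] IH])
    have "real (b i) \<noteq> 0" using b_pos[of i] i by auto
    with aux_relation_step[OF real_intersection_numbers_sum[OF i]
        assms(4)[unfolded cosine_recurrence_def, rule_format, OF i]
        assms(5)[unfolded cosine_recurrence_def, rule_format, OF i, unfolded l] assms(7)
        condA_poly_at[OF assms(1-3) i] valency_sigma_ne_eps[OF assms(3)] _
        condA_at(1)[OF assms(2) i]]
    have "\<rho> (i+1) * (\<sigma> (i+1) - \<epsilon> * \<sigma> i) = l * (\<sigma> (i-1) - \<epsilon> * \<sigma> i) * (\<sigma> i - \<epsilon> * \<sigma> (i+1))"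
      by blast
    then show ?case using l by simp
  qed
qed

lemma product_recurrence_of_condA:
  assumes "\<sigma> 0 = 1" "condA a D \<sigma> \<epsilon>" "valency_condition \<sigma> \<epsilon>" "cosine_recurrence a b c D \<sigma>"
    and "cosine_recurrence a b c D \<rho>" "\<rho> 1 * (\<sigma> 1 - \<epsilon>) = 1 - \<epsilon> * \<sigma> 1"
    and "auxiliary_parameter D \<sigma> \<rho> \<epsilon>"
  shows "cosine_recurrence a b c D (\<lambda>i. \<sigma> i * \<rho> i)"
  unfolding cosine_recurrence_def
proof
  fix i assume i: "i \<in> {1..D-1}"
  then have "\<rho> i * (\<sigma> i - \<epsilon> * \<sigma> (i-1)) = \<rho> (i-1) * (\<sigma> (i-1) - \<epsilon> * \<sigma> i)"
    using assms(7) unfolding auxiliary_parameter_iff by auto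
  then obtain l where l: "\<rho> (i-1) = l * (\<sigma> i - \<epsilon> * \<sigma> (i-1))" "\<rho> i = l * (\<sigma> (i-1) - \<epsilon> * \<sigma> i)"
    by (rule aux_relation_multiple[OF condA_nondegenerate(2,3)[OF assms(1,2)]
          condA_at(2)[OF assms(2) i]])
  from product_recurrence_step[OF real_intersection_numbers_sum[OF i]
      assms(4)[unfolded cosine_recurrence_def, rule_format, OF i]
      assms(5)[unfolded cosine_recurrence_def, rule_format, OF i, unfolded l] assms(6)
      condA_poly_at[OF assms(1-3) i] valency_sigma_ne_eps[OF assms(3)]]
  show "real (c i) * (\<sigma> (i-1) * \<rho> (i-1)) + real (a i) * (\<sigma> i * \<rho> i)
      + real (b i) * (\<sigma> (i+1) * \<rho> (i+1)) = real (b 0) * (\<sigma> 1 * \<rho> 1) * (\<sigma> i * \<rho> i)"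
    unfolding l by (simp add: algebra_simps)
qed

lemma tight_with_aux_if_condA:
  assumes "\<sigma> 0 = 1" "condA a D \<sigma> \<epsilon>" "pseudo_cosine a b c D \<sigma>"
  shows "tight_with_aux a b c D \<sigma> \<epsilon>"
proof -
  have valency: "valency_condition \<sigma> \<epsilon>" and rec_\<sigma>: "cosine_recurrence a b c D \<sigma>"
    using assms pseudo_cosine_iff_valency by blast+
  define \<rho> where "\<rho> = cosine_seq a b c ((1 - \<epsilon> * \<sigma> 1) / (\<sigma> 1 - \<epsilon>))"
  have \<rho>: "pseudo_cosine a b c D \<rho>" unfolding \<rho>_def by (rule pseudo_cosine_cosine_seq)
  then have \<rho>0: "\<rho> 0 = 1" and rec_\<rho>: "cosine_recurrence a b c D \<rho>" using pseudo_cosine_iff by auto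
  have \<rho>1: "\<rho> 1 * (\<sigma> 1 - \<epsilon>) = 1 - \<epsilon> * \<sigma> 1"
    unfolding \<rho>_def using valency_sigma_ne_eps[OF valency] by simp
  have aux: "auxiliary_parameter D \<sigma> \<rho> \<epsilon>"
    using aux_relation_of_condA[OF assms(1,2) valency rec_\<sigma> rec_\<rho> \<rho>0 \<rho>1] .
  have "cosine_recurrence a b c D (\<lambda>i. \<sigma> i * \<rho> i)"
    using product_recurrence_of_condA[OF assms(1,2) valency rec_\<sigma> rec_\<rho> \<rho>1 aux] .
  then have "tight_pair a b c D \<sigma> \<rho>"
    unfolding tight_pair_def using assms(1,3) \<rho> \<rho>0 pseudo_cosine_iff by simp
  moreover have "\<rho> 1 \<noteq> 1"
  proof
    assume "\<rho> 1 = 1"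
    then have "(1 + \<epsilon>) * (1 - \<sigma> 1) = 0" using \<rho>1 by (simp add: algebra_simps)
    then show False using condA_nondegenerate(3)[OF assms(1,2)] condA_at_1(2)[OF assms(1,2)]
      by (simp add: add_eq_0_iff)
  qed
  ultimately show ?thesis
    unfolding tight_with_aux_def nontrivial_pseudo_cosine_def
    using assms(3) \<rho> aux condA_at_1(2)[OF assms(1,2)] by blast
qed

end

section \<open>Tight pairs satisfy Condition A\<close>

locale tight_pair_aux = intersection_array +
  fixes \<sigma> \<rho> :: "nat \<Rightarrow> real" and \<epsilon> :: real
  assumes tight_pair: "tight_pair a b c D \<sigma> \<rho>"
    and aux: "auxiliary_parameter D \<sigma> \<rho> \<epsilon>"
    and \<sigma>_nontrivial: "\<sigma> 1 \<noteq> 1" and \<rho>_nontrivial: "\<rho> 1 \<noteq> 1"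
begin

lemma swap: "tight_pair_aux a b c D \<rho> \<sigma> (-\<epsilon>)"
proof unfold_locales
  show "tight_pair a b c D \<rho> \<sigma>"
    using tight_pair unfolding tight_pair_def by (simp add: mult.commute)
  show "auxiliary_parameter D \<rho> \<sigma> (-\<epsilon>)"
    using aux unfolding auxiliary_parameter_def by (simp add: algebra_simps)
qed (use \<sigma>_nontrivial \<rho>_nontrivial in auto)

lemma \<sigma>_0: "\<sigma> 0 = 1" and \<rho>_0: "\<rho> 0 = 1"
  using tight_pair pseudo_cosine_iff unfolding tight_pair_def by auto

lemma rec_\<sigma>_at: "i \<in> {1..D-1} \<Longrightarrow>
    real (c i) * \<sigma> (i-1) + real (a i) * \<sigma> i + real (b i) * \<sigma> (i+1) = real (b 0) * \<sigma> 1 * \<sigma> i"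
  and rec_\<rho>_at: "i \<in> {1..D-1} \<Longrightarrow>
    real (c i) * \<rho> (i-1) + real (a i) * \<rho> i + real (b i) * \<rho> (i+1) = real (b 0) * \<rho> 1 * \<rho> i"
  and rec_\<sigma>\<rho>_at: "i \<in> {1..D-1} \<Longrightarrow>
    real (c i) * (\<sigma> (i-1) * \<rho> (i-1)) + real (a i) * (\<sigma> i * \<rho> i) + real (b i) * (\<sigma> (i+1) * \<rho> (i+1))
      = real (b 0) * (\<sigma> 1 * \<rho> 1) * (\<sigma> i * \<rho> i)"
  using tight_pair pseudo_cosine_iff unfolding tight_pair_def cosine_recurrence_def by auto

lemma aux_at: "i \<in> {1..D} \<Longrightarrow> \<rho> i * (\<sigma> i - \<epsilon> * \<sigma> (i-1)) = \<rho> (i-1) * (\<sigma> (i-1) - \<epsilon> * \<sigma> i)"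
  using aux unfolding auxiliary_parameter_iff by blast

lemma eps_ne_1: "\<epsilon> \<noteq> 1"
proof -
  have i: "1 \<in> {1..D-1}" "2 \<in> {1..D-1}" and "1 \<in> {1..D}" "2 \<in> {1..D}" "3 \<in> {1..D}"
    using diameter_ge_3 by auto
  have aux1: "\<sigma> 1 * \<rho> 1 - 1 = \<epsilon> * (\<rho> 1 - \<sigma> 1)"
    using aux_at[OF \<open>1 \<in> {1..D}\<close>] \<sigma>_0 \<rho>_0 by (simp add: algebra_simps)
  have aux2: "\<sigma> 2 * \<rho> 2 - \<sigma> 1 * \<rho> 1 = \<epsilon> * (\<sigma> 1 * \<rho> 2 - \<sigma> 2 * \<rho> 1)"
    using aux_at[OF \<open>2 \<in> {1..D}\<close>] by (simp add: algebra_simps)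
  have aux3: "\<sigma> 3 * \<rho> 3 - \<sigma> 2 * \<rho> 2 = \<epsilon> * (\<sigma> 2 * \<rho> 3 - \<sigma> 3 * \<rho> 2)"
    using aux_at[OF \<open>3 \<in> {1..D}\<close>] by (simp add: algebra_simps)
  have "real (b 0) = 1 + real (a 1) + real (b 1)"
    and "real (b 0) = real (a 2) + real (b 2) + real (c 2)"
    using real_intersection_numbers_sum[OF i(1)] real_intersection_numbers_sum[OF i(2)] c_1 by auto
  moreover have "0 < real (a 1)" "0 < real (b 1)" "0 < real (b 2)" "0 < real (c 2)"
    using a_1 b_pos[of 1] b_pos[of 2] c_pos[OF i(2)] diameter_ge_3 by auto
  moreover note rec_\<sigma>_at[OF i(1)] rec_\<rho>_at[OF i(1)] rec_\<sigma>_at[OF i(2)] rec_\<rho>_at[OF i(2)]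
  ultimately show ?thesis
    using aux_parameter_ne_1[OF _ _ _ _ _ _ _ _ _ _ _ aux1 aux2 aux3 \<sigma>_nontrivial] \<sigma>_0 \<rho>_0 c_1
    by (simp add: numeral_2_eq_2 numeral_3_eq_3)
qed

lemma eps_ne_neg_1: "\<epsilon> \<noteq> -1"
  using tight_pair_aux.eps_ne_1[OF swap] by simp

lemma \<rho>_1: "\<rho> 1 * (\<sigma> 1 - \<epsilon>) = 1 - \<epsilon> * \<sigma> 1"
  using aux_at[of 1] diameter_ge_3 \<sigma>_0 \<rho>_0 by (simp add: algebra_simps)

lemma \<sigma>_1_ne_eps: "\<sigma> 1 \<noteq> \<epsilon>"
proof
  assume "\<sigma> 1 = \<epsilon>"
  then have "\<sigma> 1 * \<sigma> 1 = 1" using \<rho>_1 by simp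
  then show False using \<sigma>_nontrivial eps_ne_neg_1 \<open>\<sigma> 1 = \<epsilon>\<close> square_eq_1_iff by blast
qed

lemma tight_step:
  assumes i: "i \<in> {1..D-1}" and "\<sigma> (i-1) \<noteq> \<sigma> i" and "\<rho> (i-1) \<noteq> 0 \<or> \<rho> i \<noteq> 0"
  shows "real (a i) * (\<sigma> (i+1) - \<sigma> i) * (\<sigma> (i-1) - \<sigma> i) * (\<sigma> 1 - \<epsilon>)
      = real (b 0) * (1 - \<epsilon>) * (\<sigma> (i+1) - \<sigma> 1 * \<sigma> i) * (\<sigma> (i-1) - \<sigma> 1 * \<sigma> i)" (is ?A)
    and "\<sigma> (i+1) \<noteq> \<sigma> i" and "\<rho> i \<noteq> 0 \<or> \<rho> (i+1) \<noteq> 0"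
proof -
  have "i \<in> {1..D}" using i by auto
  obtain l where l: "\<rho> (i-1) = l * (\<sigma> i - \<epsilon> * \<sigma> (i-1))" "\<rho> i = l * (\<sigma> (i-1) - \<epsilon> * \<sigma> i)"
    by (rule aux_relation_multiple[OF eps_ne_1 eps_ne_neg_1 assms(2) aux_at[OF \<open>i \<in> {1..D}\<close>]])
  have "l \<noteq> 0" using assms(3) l by auto
  have pos: "0 < real (b i)" "0 < real (c i)" using b_pos c_pos i by auto
  have "real (c i) * \<sigma> (i-1) * (l * (\<sigma> i - \<epsilon> * \<sigma> (i-1)))
      + real (a i) * \<sigma> i * (l * (\<sigma> (i-1) - \<epsilon> * \<sigma> i)) + real (b i) * \<sigma> (i+1) * \<rho> (i+1)
      = real (b 0) * (\<sigma> 1 * \<rho> 1) * \<sigma> i * (l * (\<sigma> (i-1) - \<epsilon> * \<sigma> i))"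
    using rec_\<sigma>\<rho>_at[OF i] unfolding l by (simp add: algebra_simps)
  from condA_poly_step[OF real_intersection_numbers_sum[OF i] rec_\<sigma>_at[OF i]
      rec_\<rho>_at[OF i, unfolded l] \<rho>_1 this \<open>l \<noteq> 0\<close> eps_ne_neg_1] pos
  show ?A by simp
  then show "\<sigma> (i+1) \<noteq> \<sigma> i"
    using condA_poly_next_ne[OF real_intersection_numbers_sum[OF i] rec_\<sigma>_at[OF i]] pos
      eps_ne_1 \<sigma>_nontrivial assms(2) by simp
  show "\<rho> i \<noteq> 0 \<or> \<rho> (i+1) \<noteq> 0"
    using rec_\<rho>_at[OF i] assms(3) pos by auto
qed

(* The second conjunct keeps the scale l of aux_relation_multiple nonzero. *)
lemma tight_invariant:
  assumes "i \<in> {1..D-1}" shows "\<sigma> (i-1) \<noteq> \<sigma> i \<and> (\<rho> (i-1) \<noteq> 0 \<or> \<rho> i \<noteq> 0)"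
proof -
  have "1 \<le> i" "i \<le> D - 1" using assms by auto
  then show ?thesis
  proof (induction i rule: nat_induct_at_least)
    case base
    then show ?case using \<sigma>_0 \<rho>_0 \<sigma>_nontrivial by auto
  next
    case (Suc i)
    then have i: "i \<in> {1..D-1}" and "\<sigma> (i-1) \<noteq> \<sigma> i \<and> (\<rho> (i-1) \<noteq> 0 \<or> \<rho> i \<noteq> 0)" by auto
    then show ?case using tight_step(2,3)[OF i] by simp
  qed
qed

lemma condA_poly:
  assumes "i \<in> {1..D-1}"
  shows "real (a i) * (\<sigma> (i+1) - \<sigma> i) * (\<sigma> (i-1) - \<sigma> i) * (\<sigma> 1 - \<epsilon>)
      = real (b 0) * (1 - \<epsilon>) * (\<sigma> (i+1) - \<sigma> 1 * \<sigma> i) * (\<sigma> (i-1) - \<sigma> 1 * \<sigma> i)"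
    and "\<sigma> (i+1) \<noteq> \<sigma> i" "\<sigma> (i-1) \<noteq> \<sigma> i"
  using tight_step[OF assms] tight_invariant[OF assms] by auto

lemma condA: "condA a D \<sigma> \<epsilon>"
proof -
  have i: "1 \<in> {1..D-1}" "2 \<in> {1..D-1}" using diameter_ge_3 by auto
  have A1: "real (a 1) * (\<sigma> 2 - \<sigma> 1) * (1 - \<sigma> 1) * (\<sigma> 1 - \<epsilon>)
      = real (b 0) * (1 - \<epsilon>) * (\<sigma> 2 - \<sigma> 1 * \<sigma> 1) * (1 - \<sigma> 1 * \<sigma> 1)"
    using condA_poly(1)[OF i(1)] \<sigma>_0 by (simp add: numeral_2_eq_2)
  have rec1: "1 + real (a 1) * \<sigma> 1 + real (b 1) * \<sigma> 2 = real (b 0) * \<sigma> 1 * \<sigma> 1"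
    using rec_\<sigma>_at[OF i(1)] \<sigma>_0 c_1 by (simp add: numeral_2_eq_2)
  have "real (b 0) = 1 + real (a 1) + real (b 1)"
    using real_intersection_numbers_sum[OF i(1)] c_1 by simp
  from valency_poly_of_step_1[OF this rec1 \<sigma>_nontrivial A1]
  have valency_poly: "(1 - \<sigma> 2) * (\<sigma> 1 - \<epsilon>) = real (b 0) * (\<sigma> 2 - \<sigma> 1 ^ 2) * (1 - \<epsilon> * \<sigma> 1)" .
  have A2: "real (a 2) * (\<sigma> 3 - \<sigma> 2) * (\<sigma> 1 - \<sigma> 2) * (\<sigma> 1 - \<epsilon>)
      = real (b 0) * (1 - \<epsilon>) * (\<sigma> 3 - \<sigma> 1 * \<sigma> 2) * (\<sigma> 1 - \<sigma> 1 * \<sigma> 2)"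
    using condA_poly(1)[OF i(2)] by (simp add: numeral_3_eq_3)
  have "\<sigma> 3 \<noteq> \<sigma> 2" "\<sigma> 2 \<noteq> \<sigma> 1"
    using condA_poly(2)[OF i(2)] condA_poly(2)[OF i(1)]
    by (simp_all add: numeral_3_eq_3 numeral_2_eq_2)
  with denominator_ne_0[OF valency_poly \<sigma>_1_ne_eps \<sigma>_nontrivial _ _ A1 A2] a_1 a_2
  have N: "(\<sigma> 1 ^ 2 - \<sigma> 2) * (1 - \<epsilon> * \<sigma> 1) \<noteq> 0" by simp
  note valency = valency_of_valency_poly[OF N \<sigma>_nontrivial valency_poly]
  show ?thesis
    unfolding condA_def
  proof (intro conjI ballI eps_ne_neg_1 N)
    fix i assume i: "i \<in> {1..D-1}"
    show "(\<sigma> (i+1) - \<sigma> i) * (\<sigma> (i-1) - \<sigma> i) \<noteq> 0" using condA_poly(2,3)[OF i] by simp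
    show "real (a i) = (\<epsilon> - 1) * (1 - \<sigma> 2) / ((\<sigma> 1 ^ 2 - \<sigma> 2) * (1 - \<epsilon> * \<sigma> 1)) *
        ((\<sigma> (i+1) - \<sigma> 1 * \<sigma> i) * (\<sigma> (i-1) - \<sigma> 1 * \<sigma> i) / ((\<sigma> (i+1) - \<sigma> i) * (\<sigma> (i-1) - \<sigma> i)))"
      using condA_step_iff_poly[OF N \<sigma>_nontrivial \<sigma>_1_ne_eps condA_poly(2,3)[OF i] valency]
        condA_poly(1)[OF i] by blast
  qed
qed

end

context intersection_array
begin

lemma condA_if_tight_with_aux:
  assumes "tight_with_aux a b c D \<sigma> \<epsilon>" shows "condA a D \<sigma> \<epsilon>"
proof -
  obtain \<rho> where "nontrivial_pseudo_cosine a b c D \<rho>" "tight_pair a b c D \<sigma> \<rho>"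
    "auxiliary_parameter D \<sigma> \<rho> \<epsilon>" "nontrivial_pseudo_cosine a b c D \<sigma>"
    using assms unfolding tight_with_aux_def by blast
  then interpret tight_pair_aux a b c D \<sigma> \<rho> \<epsilon>
    by unfold_locales (auto simp: nontrivial_pseudo_cosine_def)
  show ?thesis by (rule condA)
qed

lemma tight_with_aux_iff_condA:
  assumes "\<sigma> 0 = 1"
  shows "tight_with_aux a b c D \<sigma> \<epsilon> \<longleftrightarrow> nontrivial_pseudo_cosine a b c D \<sigma> \<and> condA a D \<sigma> \<epsilon>"
  using condA_if_tight_with_aux tight_with_aux_if_condA[where \<sigma> = \<sigma>, OF assms]
  unfolding tight_with_aux_def nontrivial_pseudo_cosine_def by blast

lemma nontrivial_pseudo_cosine_iff_condB:
  assumes "\<sigma> 0 = 1" "condA a D \<sigma> \<epsilon>"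
  shows "nontrivial_pseudo_cosine a b c D \<sigma> \<longleftrightarrow> condB b D \<sigma> \<epsilon>"
  using pseudo_cosine_iff_valency[OF assms] condB_iff_valency[OF assms] condA_at_1(2)[OF assms]
  unfolding nontrivial_pseudo_cosine_def by blast

lemma condB_iff_condC:
  assumes "\<sigma> 0 = 1" "condA a D \<sigma> \<epsilon>"
  shows "condB b D \<sigma> \<epsilon> \<longleftrightarrow> condC b c D \<sigma> \<epsilon>"
  using condB_iff_valency[OF assms] condC_iff_valency[OF assms] by blast

end

section \<open>Intersection numbers of a distance-regular graph\<close>

lemma gdist_le: "(x, y) \<in> adj_rel E ^^ n \<Longrightarrow> gdist E x y \<le> n"
  unfolding gdist_def by (rule Least_le)

lemma walk_gdist: "(x, y) \<in> adj_rel E ^^ n \<Longrightarrow> (x, y) \<in> adj_rel E ^^ gdist E x y"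
  unfolding gdist_def by (rule LeastI)

lemma gdist_self: "gdist E x x = 0"
  using gdist_le[where x=x and y=x and n=0] by simp

lemma walk_snoc: "(x, y) \<in> adj_rel E ^^ n \<Longrightarrow> E y z \<Longrightarrow> (x, z) \<in> adj_rel E ^^ Suc n"
  by (auto simp: adj_rel_def)

lemma walk_edge_edge: "E x y \<Longrightarrow> E y z \<Longrightarrow> (x, z) \<in> adj_rel E ^^ 2"
  by (auto simp: adj_rel_def numeral_2_eq_2 relpow_Suc_I2)

locale distance_regular_graph =
  fixes V :: "'v set" and E :: "'v \<Rightarrow> 'v \<Rightarrow> bool" and a b c :: "nat \<Rightarrow> nat"
  assumes distance_regular: "distance_regular V E a b c"
begin

lemma finite_V: "finite V" and V_nonempty: "V \<noteq> {}"
  and edge_in_V: "E x y \<Longrightarrow> x \<in> V \<and> y \<in> V"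
  and edge_sym: "E x y \<Longrightarrow> E y x" and edge_irrefl: "\<not> E x x"
  using distance_regular unfolding distance_regular_def simple_graph_def by blast+

lemma connected: "x \<in> V \<Longrightarrow> y \<in> V \<Longrightarrow> \<exists>n. (x, y) \<in> adj_rel E ^^ n"
  using distance_regular unfolding distance_regular_def graph_connected_def by blast

lemma intersection_numbers:
  assumes "x \<in> V" "y \<in> V"
  shows "c (gdist E x y) = card {z \<in> V. E y z \<and> gdist E x z + 1 = gdist E x y}"
    and "a (gdist E x y) = card {z \<in> V. E y z \<and> gdist E x z = gdist E x y}"
    and "b (gdist E x y) = card {z \<in> V. E y z \<and> gdist E x z = gdist E x y + 1}"
  using distance_regular assms unfolding distance_regular_def by blast+

lemma walk_gdist_in_V:
  assumes "x \<in> V" "y \<in> V" shows "(x, y) \<in> adj_rel E ^^ gdist E x y"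
proof -
  obtain n where "(x, y) \<in> adj_rel E ^^ n" using connected assms by blast
  then show ?thesis by (rule walk_gdist)
qed

lemma gdist_eq_0_iff:
  assumes "x \<in> V" "y \<in> V" shows "gdist E x y = 0 \<longleftrightarrow> x = y"
  using walk_gdist_in_V[OF assms] gdist_self[of E x] by auto

lemma gdist_edge:
  assumes "E x y" shows "gdist E x y = 1"
proof -
  have "gdist E x y \<le> 1" using assms gdist_le[where n = 1] by (simp add: adj_rel_def)
  moreover have "gdist E x y \<noteq> 0" using gdist_eq_0_iff edge_in_V edge_irrefl assms by metis
  ultimately show ?thesis by simp
qed

lemma gdist_eq_1_iff:
  assumes "x \<in> V" "y \<in> V" shows "gdist E x y = 1 \<longleftrightarrow> E x y"
  using walk_gdist_in_V[OF assms] gdist_edge by (auto simp: adj_rel_def)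

lemma gdist_along_edge:
  assumes "x \<in> V" "E y z" shows "gdist E x z \<le> gdist E x y + 1"
proof -
  have "(x, z) \<in> adj_rel E ^^ Suc (gdist E x y)"
    using walk_snoc[OF walk_gdist_in_V] assms edge_in_V by blast
  then show ?thesis using gdist_le by fastforce
qed

lemma gdist_predecessor:
  assumes "x \<in> V" "y \<in> V" "gdist E x y = Suc m"
  obtains z where "E z y" "gdist E x z = m"
proof -
  have "(x, y) \<in> adj_rel E ^^ Suc m" using walk_gdist_in_V[OF assms(1,2)] assms(3) by simp
  then obtain z where xz: "(x, z) \<in> adj_rel E ^^ m" and zy: "E z y"
    by (auto simp: adj_rel_def relpow_Suc_D2')
  have "gdist E x z = m"
    using gdist_le[OF xz] gdist_along_edge[OF assms(1) zy] assms(3) by simp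
  with zy that show ?thesis by blast
qed

lemma distance_attained:
  assumes "j \<le> diameter V E"
  obtains x y where "x \<in> V" "y \<in> V" "gdist E x y = j"
proof -
  have "{gdist E x y | x y. x \<in> V \<and> y \<in> V} = (\<lambda>(x, y). gdist E x y) ` (V \<times> V)" by auto
  then have "finite {gdist E x y | x y. x \<in> V \<and> y \<in> V}" "{gdist E x y | x y. x \<in> V \<and> y \<in> V} \<noteq> {}"
    using finite_V V_nonempty by auto
  then have "diameter V E \<in> {gdist E x y | x y. x \<in> V \<and> y \<in> V}"
    unfolding diameter_def by (rule Max_in)
  then obtain x y where x: "x \<in> V" and y: "y \<in> V" and diam: "diameter V E = gdist E x y" by blast
  have "\<exists>z\<in>V. gdist E x z = j" if "y \<in> V" "gdist E x y = m" "j \<le> m" for y m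
    using that
  proof (induction m arbitrary: y)
    case 0
    then show ?case using x gdist_self[of E x] by auto
  next
    case (Suc m)
    show ?case
    proof (cases "j = Suc m")
      case True
      then show ?thesis using Suc.prems(1,2) by auto
    next
      case False
      obtain z where "E z y" "gdist E x z = m" using gdist_predecessor x Suc.prems(1,2) .
      then show ?thesis using Suc.IH[of z] Suc.prems(3) False edge_in_V by auto
    qed
  qed
  then obtain z where "z \<in> V" "gdist E x z = j" using y diam assms by auto
  with x show ?thesis by (rule that)
qed

lemma a_0: "a 0 = 0"
proof -
  obtain x where x: "x \<in> V" using V_nonempty by blast
  have "a 0 = card {z \<in> V. E x z \<and> gdist E x z = 0}"
    using intersection_numbers(2)[OF x x] by (simp add: gdist_self)
  also have "{z \<in> V. E x z \<and> gdist E x z = 0} = {}" using gdist_eq_0_iff x edge_irrefl by blast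
  finally show ?thesis by simp
qed

lemma c_1:
  assumes "1 \<le> diameter V E" shows "c 1 = 1"
proof -
  obtain x y where x: "x \<in> V" and y: "y \<in> V" and xy: "gdist E x y = 1"
    using distance_attained assms .
  have "c 1 = card {z \<in> V. E y z \<and> gdist E x z + 1 = 1}"
    using intersection_numbers(1)[OF x y] xy by simp
  also have "{z \<in> V. E y z \<and> gdist E x z + 1 = 1} = {x}"
    using gdist_eq_0_iff x y xy gdist_eq_1_iff edge_sym by auto
  finally show ?thesis by simp
qed

lemma intersection_numbers_sum:
  assumes "i \<le> diameter V E" shows "a i + b i + c i = b 0"
proof -
  obtain x y where x: "x \<in> V" and y: "y \<in> V" and xy: "gdist E x y = i"
    using distance_attained assms .
  define C where "C = {z \<in> V. E y z \<and> gdist E x z + 1 = i}"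
  define A where "A = {z \<in> V. E y z \<and> gdist E x z = i}"
  define B where "B = {z \<in> V. E y z \<and> gdist E x z = i + 1}"
  have "gdist E x z + 1 = i \<or> gdist E x z = i \<or> gdist E x z = i + 1" if "E y z" for z
    using gdist_along_edge[OF x that] gdist_along_edge[OF x edge_sym[OF that]] xy by linarith
  then have "{z \<in> V. E y z} = C \<union> A \<union> B" unfolding C_def A_def B_def by blast
  moreover have "finite C" "finite A" "finite B" using finite_V unfolding C_def A_def B_def by auto
  moreover have "C \<inter> A = {}" "(C \<union> A) \<inter> B = {}" unfolding C_def A_def B_def by auto
  ultimately have "card {z \<in> V. E y z} = card C + card A + card B"
    by (simp add: card_Un_disjoint)
  moreover have "b 0 = card {z \<in> V. E y z \<and> gdist E y z = 1}"
    using intersection_numbers(3)[OF y y] by (simp add: gdist_self)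
  moreover have "{z \<in> V. E y z \<and> gdist E y z = 1} = {z \<in> V. E y z}" using gdist_edge by blast
  ultimately show ?thesis using intersection_numbers[OF x y] xy C_def A_def B_def by simp
qed

lemma b_pos:
  assumes "i < diameter V E" shows "0 < b i"
proof -
  obtain x y where x: "x \<in> V" and y: "y \<in> V" and xy: "gdist E x y = Suc i"
    using distance_attained assms by (metis Suc_leI)
  obtain z where zy: "E z y" and xz: "gdist E x z = i" using gdist_predecessor x y xy .
  have "b i = card {w \<in> V. E z w \<and> gdist E x w = i + 1}"
    using intersection_numbers(3)[OF x, of z] edge_in_V zy xz by simp
  moreover have "y \<in> {w \<in> V. E z w \<and> gdist E x w = i + 1}" using y zy xy by simp
  ultimately show ?thesis using finite_V by (auto simp: card_gt_0_iff)
qed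

lemma c_pos:
  assumes "1 \<le> i" "i \<le> diameter V E" shows "0 < c i"
proof -
  obtain x y where x: "x \<in> V" and y: "y \<in> V" and xy: "gdist E x y = i"
    using distance_attained assms(2) .
  obtain m where i: "i = Suc m" using assms(1) by (cases i) auto
  obtain z where zy: "E z y" and xz: "gdist E x z = m" using gdist_predecessor x y xy i by metis
  have "c i = card {w \<in> V. E y w \<and> gdist E x w + 1 = i}"
    using intersection_numbers(1)[OF x y] xy by simp
  moreover have "z \<in> {w \<in> V. E y w \<and> gdist E x w + 1 = i}"
    using zy edge_sym edge_in_V xz i by auto
  ultimately show ?thesis using finite_V by (auto simp: card_gt_0_iff)
qed

lemma adjacent_if_a2_eq_0:
  assumes "a 2 = 0" "x \<in> V" "y \<in> V" "gdist E x y = 2" "E x v" "E v w" "E y w"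
  shows "E x w"
proof -
  have w: "w \<in> V" using edge_in_V assms(7) by blast
  have "gdist E x w \<le> 2" using gdist_le walk_edge_edge assms(5,6) by metis
  moreover have "gdist E x w \<noteq> 2"
  proof
    assume "gdist E x w = 2"
    then have "w \<in> {z \<in> V. E y z \<and> gdist E x z = gdist E x y}" using w assms(4,7) by simp
    moreover have "a 2 = card {z \<in> V. E y z \<and> gdist E x z = gdist E x y}"
      using intersection_numbers(2)[OF assms(2,3)] assms(4) by simp
    ultimately show False using assms(1) finite_V by (auto simp: card_eq_0_iff)
  qed
  moreover have "x \<noteq> w" using assms(4,7) gdist_edge edge_sym by fastforce
  then have "gdist E x w \<noteq> 0" using gdist_eq_0_iff assms(2) w by blast
  ultimately have "gdist E x w = 1" by linarith
  then show ?thesis using gdist_eq_1_iff assms(2) w by blast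
qed

lemma a2_ne_0:
  assumes "3 \<le> diameter V E" "a 1 \<noteq> 0" shows "a 2 \<noteq> 0"
proof
  assume a2: "a 2 = 0"
  obtain v z where v: "v \<in> V" and z: "z \<in> V" and vz: "gdist E v z = 3"
    using distance_attained assms(1) .
  have "gdist E v z = Suc 2" using vz by simp
  then obtain w where wz: "E w z" and vw: "gdist E v w = 2" using gdist_predecessor[OF v z] by blast
  have w: "w \<in> V" using edge_in_V wz by blast
  have "gdist E v w = Suc 1" using vw by simp
  then obtain y where yw: "E y w" and vy: "gdist E v y = 1" using gdist_predecessor[OF v w] by blast
  have y: "y \<in> V" using edge_in_V yw by blast
  have vy': "E v y" using gdist_eq_1_iff v y vy by blast
  have "E v z"
  proof (cases "E y z")
    case True
    show ?thesis using adjacent_if_a2_eq_0[OF a2 v w vw vy' True wz] .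
  next
    case False
    \<comment> \<open>then a common neighbour p of y and w, which exists as a_1 > 0, is adjacent to v and z\<close>
    have "gdist E z y \<le> 2"
      using gdist_le walk_edge_edge[where E = E, OF edge_sym[OF wz] edge_sym[OF yw]] .
    moreover have "gdist E z y \<noteq> 0" using gdist_eq_0_iff[OF z y] vy vz by auto
    moreover have "gdist E z y \<noteq> 1" using gdist_eq_1_iff[OF z y] False edge_sym by blast
    ultimately have zy: "gdist E z y = 2" by linarith
    have "a 1 = card {p \<in> V. E w p \<and> gdist E y p = 1}"
      using intersection_numbers(2)[OF y w] gdist_edge[OF yw] by simp
    then have "{p \<in> V. E w p \<and> gdist E y p = 1} \<noteq> {}" using assms(2) by (metis card.empty)
    then obtain p where p: "p \<in> V" and wp: "E w p" and "gdist E y p = 1" by blast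
    then have yp: "E y p" using gdist_eq_1_iff y by blast
    have zp: "E z p" using adjacent_if_a2_eq_0[OF a2 z y zy edge_sym[OF wz] wp yp] .
    have vp: "E v p" using adjacent_if_a2_eq_0[OF a2 v w vw vy' yp wp] .
    show ?thesis using adjacent_if_a2_eq_0[OF a2 v w vw vp edge_sym[OF zp] wz] .
  qed
  then show False using gdist_edge vz by simp
qed

end

lemma (in distance_regular_graph) intersection_array:
  assumes "3 \<le> diameter V E" "a 1 \<noteq> 0"
  shows "intersection_array a b c (diameter V E)"
  using assms a_0 c_1 a2_ne_0 intersection_numbers_sum b_pos c_pos
  by unfold_locales auto

theorem theorem14p2:
  fixes V :: "'v set" and E :: "'v \<Rightarrow> 'v \<Rightarrow> bool"
    and a b c :: "nat \<Rightarrow> nat" and \<sigma> :: "nat \<Rightarrow> real" and \<epsilon> :: real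
  assumes drg: "distance_regular V E a b c"
    and D3: "diameter V E \<ge> 3"
    and a1: "a 1 \<noteq> 0"
    and s0: "\<sigma> 0 = 1"
  shows "(tight_with_aux a b c (diameter V E) \<sigma> \<epsilon>
            \<longleftrightarrow> nontrivial_pseudo_cosine a b c (diameter V E) \<sigma> \<and> condA a (diameter V E) \<sigma> \<epsilon>)
       \<and> (nontrivial_pseudo_cosine a b c (diameter V E) \<sigma> \<and> condA a (diameter V E) \<sigma> \<epsilon>
            \<longleftrightarrow> condA a (diameter V E) \<sigma> \<epsilon> \<and> condB b (diameter V E) \<sigma> \<epsilon>)
       \<and> (condA a (diameter V E) \<sigma> \<epsilon> \<and> condB b (diameter V E) \<sigma> \<epsilon>
            \<longleftrightarrow> condA a (diameter V E) \<sigma> \<epsilon> \<and> condC b c (diameter V E) \<sigma> \<epsilon>)"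
proof -
  interpret intersection_array a b c "diameter V E"
    using distance_regular_graph.intersection_array[OF distance_regular_graph.intro[OF drg] D3 a1] .
  show ?thesis
    using tight_with_aux_iff_condA[where \<sigma> = \<sigma>, OF s0]
      nontrivial_pseudo_cosine_iff_condB[where \<sigma> = \<sigma>, OF s0]
      condB_iff_condC[where \<sigma> = \<sigma>, OF s0] by blast
qed

end
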